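(* Let $n,k$ be positive integers such that $n\ge 8k$, and let $i\in\{1,\ldots,n\}$. If $H\sim\text{Hyp}(n,i,k)$, then \[ \mathbb{P}\left(H \ge \mathbb{E}(H)\right) \,\ge\, \frac{k}{n}. \]
   Context: For positive integers $n\ge k$ and $i\in\{1,\ldots,n\}$, $\text{Hyp}(n,i,k)$ denotes the hypergeometric distribution: the number of black marbles in a sample without replacement of size $k$ from an urn with $i$ black and $n-i$ white marbles, i.e. $\mathbb{P}(H=j)=\binom{i}{j}\binom{n-i}{k-j}/\binom{n}{k}$ for $j\in\{\max\{0,k-(n-i)\},\ldots,\min\{k,i\}\}$. Its mean is $\mathbb{E}(H)=ik/n$. *)

theory Defs
  imports Complex_Main
begin

text \<open>Probability mass function of Hyp(n,i,k): number of black marbles in a sample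
  of size k drawn without replacement from an urn with i black and n - i white marbles.\<close>
definition hyp_pmf :: "nat \<Rightarrow> nat \<Rightarrow> nat \<Rightarrow> nat \<Rightarrow> real" where
  "hyp_pmf n i k j =
     (if j \<le> k then real ((i choose j) * ((n - i) choose (k - j))) / real (n choose k) else 0)"

definition hyp_mean :: "nat \<Rightarrow> nat \<Rightarrow> nat \<Rightarrow> real" where
  "hyp_mean n i k = real i * real k / real n"

definition hyp_prob_ge :: "nat \<Rightarrow> nat \<Rightarrow> nat \<Rightarrow> real \<Rightarrow> real" where
  "hyp_prob_ge n i k t = (\<Sum>j\<in>{j\<in>{0..k}. real j \<ge> t}. hyp_pmf n i k j)"

end

theory Submission
  imports Defs
begin

text \<open>Let \<open>p\<close> be the pmf of \<open>H\<close> and \<open>m = ik/n\<close> its mean. If \<open>m \<le> 1\<close>, then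
  \<open>P(H \<ge> m) = 1 - p(0) \<ge> k/n\<close>. Otherwise take \<open>c \<ge> 1\<close> with \<open>c < m \<le> c + 1\<close>; it suffices to show
  \<open>P(H \<ge> c + 1) \<ge> 2/15 > k/n\<close>. Everything follows from the ratio recurrence
  \<open>p(j+1) (j+1) (n-i-k+j+1) = p(j) (i-j) (k-j)\<close>: first \<open>p(c) \<le> 2 p(c+1)\<close>; second, reflecting
  about \<open>c - 1/2\<close>, \<open>p(c-1-l) \<le> p(c+l)\<close> for as long as a quadratic inequality in the distance
  holds; third, where that inequality first fails, the pmf is growing geometrically below
  \<open>c-1-l\<close>, so fast that the remaining lower tail is at most half of \<open>P(H \<ge> c)\<close>. As the
  reflected part of the lower tail is bounded by \<open>P(H \<ge> c)\<close> too, \<open>P(H \<ge> c) \<ge> 2/5\<close>, and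
  \<open>P(H \<ge> c + 1) \<ge> P(H \<ge> c) / 3 \<ge> 2/15\<close>.\<close>

lemma hyp_pmf_nonneg: "0 \<le> hyp_pmf n i k j"
  unfolding hyp_pmf_def by simp

lemma hyp_pmf_eq_0: "n - i < k - j \<Longrightarrow> hyp_pmf n i k j = 0"
  unfolding hyp_pmf_def by simp

lemma sum_hyp_pmf:
  assumes "i \<le> n" "k \<le> n"
  shows "(\<Sum>j\<le>k. hyp_pmf n i k j) = 1"
proof -
  have "(\<Sum>j\<le>k. (i choose j) * ((n - i) choose (k - j))) = n choose k"
    using vandermonde[of i "n - i" k] assms by simp
  then have "(\<Sum>j\<le>k. real ((i choose j) * ((n - i) choose (k - j)))) = real (n choose k)"
    by (metis of_nat_sum)
  moreover have "real (n choose k) \<noteq> 0"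
    using assms by simp
  ultimately show ?thesis
    by (simp add: hyp_pmf_def flip: sum_divide_distrib)
qed

lemma real_binomial_Suc_mult:
  "real (a choose Suc j) * (real j + 1) = real (a choose j) * (real a - real j)"
proof (cases "j \<le> a")
  case True
  have "Suc j * (a choose Suc j) = (a - j) * (a choose j)"
    by (simp only: binomial_absorption binomial_absorb_comp)
  then have "real (Suc j * (a choose Suc j)) = real ((a - j) * (a choose j))"
    by (rule arg_cong)
  with True show ?thesis
    by (simp add: of_nat_diff algebra_simps)
qed (simp add: binomial_eq_0)

lemma hyp_pmf_Suc:
  assumes "i \<le> n"
  shows "hyp_pmf n i k (Suc j) * ((real j + 1) * (real n - real i - real k + real j + 1))
       = hyp_pmf n i k j * ((real i - real j) * (real k - real j))"
proof (cases "j < k")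
  case True
  define r where "r = k - Suc j"
  have k_minus_j: "k - j = Suc r" and real_r: "real r = real k - real j - 1"
    using True by (simp_all add: r_def of_nat_diff)
  have real_ni: "real (n - i) = real n - real i"
    using assms by simp
  have i_step: "real (i choose Suc j) * (real j + 1) = real (i choose j) * (real i - real j)"
    by (rule real_binomial_Suc_mult)
  have "real ((n - i) choose r) * (real n - real i - real k + real j + 1)
      = real ((n - i) choose (k - j)) * (real k - real j)"
    using real_binomial_Suc_mult[of "n - i" r] real_ni real_r k_minus_j by (simp add: algebra_simps)
  with i_step have "(real (i choose Suc j) * (real j + 1))
      * (real ((n - i) choose r) * (real n - real i - real k + real j + 1))
      = (real (i choose j) * (real i - real j)) * (real ((n - i) choose (k - j)) * (real k - real j))"
    by simp
  then show ?thesis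
    using True by (simp add: hyp_pmf_def r_def mult_ac)
next
  case False
  then show ?thesis
    by (cases "j = k") (simp_all add: hyp_pmf_def)
qed

lemma hyp_prob_ge_eq_sum: "hyp_prob_ge n i k t = (\<Sum>j = nat \<lceil>t\<rceil>..k. hyp_pmf n i k j)"
proof -
  have "{j \<in> {0..k}. t \<le> real j} = {nat \<lceil>t\<rceil>..k}"
    by (auto simp: ceiling_le_iff nat_le_iff)
  then show ?thesis
    by (simp add: hyp_prob_ge_def)
qed

lemma hyp_pmf_0_le:
  assumes "1 \<le> i" "i \<le> n" "k \<le> n"
  shows "hyp_pmf n i k 0 \<le> 1 - real k / real n"
proof -
  have "real n * real ((n - i) choose k) \<le> real n * real ((n - 1) choose k)"
    using assms by (simp add: binomial_right_mono)
  also have "\<dots> = (real n - real k) * real (n choose k)"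
    using binomial_absorb_comp[of n k] assms
    by (metis of_nat_diff of_nat_mult mult.commute)
  finally show ?thesis
    using assms by (simp add: hyp_pmf_def divide_simps mult.commute)
qed

lemma hyp_prob_pos_ge:
  assumes "1 \<le> i" "i \<le> n" "k \<le> n"
  shows "real k / real n \<le> (\<Sum>j = 1..k. hyp_pmf n i k j)"
proof -
  have "(\<Sum>j\<le>k. hyp_pmf n i k j) = hyp_pmf n i k 0 + (\<Sum>j = 1..k. hyp_pmf n i k j)"
    by (simp add: atMost_atLeast0 sum.atLeast_Suc_atMost)
  then show ?thesis
    using sum_hyp_pmf[of i n k] hyp_pmf_0_le[OF assms] assms by simp
qed

lemma growth_sum_lessThan_le:
  fixes f :: "nat \<Rightarrow> real"
  assumes "\<And>j. 0 \<le> f j" and "\<And>j. j < s \<Longrightarrow> \<rho> * f j \<le> f (Suc j)"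
  shows "(\<rho> - 1) * (\<Sum>j<s. f j) \<le> f s"
proof -
  have "\<rho> * (\<Sum>j<s. f j) \<le> (\<Sum>j<s. f (Suc j))"
    unfolding sum_distrib_left using assms(2) by (intro sum_mono) auto
  moreover have "(\<Sum>j<s. f j) + f s = f 0 + (\<Sum>j<s. f (Suc j))"
    by (metis sum.lessThan_Suc sum.lessThan_Suc_shift)
  ultimately show ?thesis
    using assms(1)[of 0] by (simp add: algebra_simps)
qed

lemma reflection_cond_imp_less:
  fixes \<alpha> \<beta> \<gamma> \<delta> u :: real
  assumes "0 < u" "u < \<gamma>" "\<gamma> \<le> \<alpha>" "u < \<delta>" "0 \<le> \<beta>"
    and "(\<gamma>\<^sup>2 - u\<^sup>2) * (\<delta>\<^sup>2 - u\<^sup>2) \<le> (\<alpha>\<^sup>2 - u\<^sup>2) * (\<beta>\<^sup>2 - u\<^sup>2)"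
  shows "u < \<beta>"
proof (rule ccontr)
  assume "\<not> u < \<beta>"
  then have "\<beta>\<^sup>2 - u\<^sup>2 \<le> 0" and "0 < \<alpha>\<^sup>2 - u\<^sup>2"
    using assms(1-3,5) by (simp_all add: power_mono power_strict_mono)
  then have "(\<alpha>\<^sup>2 - u\<^sup>2) * (\<beta>\<^sup>2 - u\<^sup>2) \<le> 0"
    by (simp add: mult_nonneg_nonpos)
  moreover have "0 < (\<gamma>\<^sup>2 - u\<^sup>2) * (\<delta>\<^sup>2 - u\<^sup>2)"
    using assms(1,2,4) by (simp add: power_strict_mono)
  ultimately show False
    using assms(6) by linarith
qed

lemma reflected_ratio_step:
  fixes \<alpha> \<beta> \<gamma> \<delta> u a a' b b' :: real
  assumes "0 < u" "u < \<gamma>" "\<gamma> \<le> \<alpha>" "u < \<delta>" "0 \<le> \<beta>"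
    and cond: "(\<gamma>\<^sup>2 - u\<^sup>2) * (\<delta>\<^sup>2 - u\<^sup>2) \<le> (\<alpha>\<^sup>2 - u\<^sup>2) * (\<beta>\<^sup>2 - u\<^sup>2)"
    and "a \<le> b" "0 \<le> a'"
    and up: "b' * ((\<gamma> + u) * (\<delta> + u)) = b * ((\<alpha> - u) * (\<beta> - u))"
    and down: "a * ((\<gamma> - u) * (\<delta> - u)) = a' * ((\<alpha> + u) * (\<beta> + u))"
  shows "a' \<le> b'"
proof -
  have "u < \<beta>"
    using reflection_cond_imp_less assms(1-6) by blast
  then have "0 \<le> (\<alpha> - u) * (\<beta> - u) * ((\<gamma> - u) * (\<delta> - u))"
    using assms(1-4) by simp
  then have "a * ((\<alpha> - u) * (\<beta> - u) * ((\<gamma> - u) * (\<delta> - u)))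
      \<le> b * ((\<alpha> - u) * (\<beta> - u) * ((\<gamma> - u) * (\<delta> - u)))"
    using \<open>a \<le> b\<close> by (rule mult_right_mono[rotated])
  moreover have "a * ((\<alpha> - u) * (\<beta> - u) * ((\<gamma> - u) * (\<delta> - u)))
      = a' * ((\<alpha>\<^sup>2 - u\<^sup>2) * (\<beta>\<^sup>2 - u\<^sup>2))"
  proof -
    have "a * ((\<alpha> - u) * (\<beta> - u) * ((\<gamma> - u) * (\<delta> - u)))
        = (a * ((\<gamma> - u) * (\<delta> - u))) * ((\<alpha> - u) * (\<beta> - u))"
      by (simp only: ac_simps)
    also have "\<dots> = a' * (((\<alpha> + u) * (\<alpha> - u)) * ((\<beta> + u) * (\<beta> - u)))"
      unfolding down by (simp only: ac_simps)
    finally show ?thesis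
      by (simp add: power2_eq_square algebra_simps)
  qed
  moreover have "b * ((\<alpha> - u) * (\<beta> - u) * ((\<gamma> - u) * (\<delta> - u)))
      = b' * ((\<gamma>\<^sup>2 - u\<^sup>2) * (\<delta>\<^sup>2 - u\<^sup>2))"
  proof -
    have "b * ((\<alpha> - u) * (\<beta> - u) * ((\<gamma> - u) * (\<delta> - u)))
        = (b * ((\<alpha> - u) * (\<beta> - u))) * ((\<gamma> - u) * (\<delta> - u))"
      by (simp only: ac_simps)
    also have "\<dots> = b' * (((\<gamma> + u) * (\<gamma> - u)) * ((\<delta> + u) * (\<delta> - u)))"
      unfolding up[symmetric] by (simp only: ac_simps)
    finally show ?thesis
      by (simp add: power2_eq_square algebra_simps)
  qed
  ultimately have "a' * ((\<alpha>\<^sup>2 - u\<^sup>2) * (\<beta>\<^sup>2 - u\<^sup>2)) \<le> b' * ((\<gamma>\<^sup>2 - u\<^sup>2) * (\<delta>\<^sup>2 - u\<^sup>2))"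
    by simp
  moreover have "a' * ((\<gamma>\<^sup>2 - u\<^sup>2) * (\<delta>\<^sup>2 - u\<^sup>2)) \<le> a' * ((\<alpha>\<^sup>2 - u\<^sup>2) * (\<beta>\<^sup>2 - u\<^sup>2))"
    using cond \<open>0 \<le> a'\<close> by (rule mult_left_mono)
  moreover have "0 < (\<gamma>\<^sup>2 - u\<^sup>2) * (\<delta>\<^sup>2 - u\<^sup>2)"
    using assms(1,2,4) by (simp add: power_strict_mono)
  ultimately show ?thesis
    by (meson mult_right_le_imp_le order_trans)
qed

lemma reflection_failure_large:
  fixes \<alpha> \<beta> \<gamma> \<delta> v :: real
  assumes "0 < \<gamma>" "\<gamma> \<le> \<alpha>" "0 \<le> v" "v < \<gamma>" "v < \<delta>"
    and gap: "\<gamma> * \<delta> + \<alpha> \<le> \<alpha> * \<beta>"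
    and fail: "(\<alpha>\<^sup>2 - v\<^sup>2) * (\<beta>\<^sup>2 - v\<^sup>2) < (\<gamma>\<^sup>2 - v\<^sup>2) * (\<delta>\<^sup>2 - v\<^sup>2)"
  shows "2 * (\<gamma> * \<delta>) < \<alpha> * (v\<^sup>2 - 1)"
proof -
  have "0 < \<gamma> * \<delta>" "0 < \<alpha>"
    using assms(1-5) by simp_all
  have "(\<alpha> * \<beta>)\<^sup>2 < (\<gamma> * \<delta>)\<^sup>2 + \<alpha>\<^sup>2 * v\<^sup>2"
  proof (cases "\<beta>\<^sup>2 \<le> v\<^sup>2")
    case True
    then have "(\<alpha> * \<beta>)\<^sup>2 \<le> \<alpha>\<^sup>2 * v\<^sup>2"
      by (simp add: power_mult_distrib mult_left_mono)
    then show ?thesis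
      using \<open>0 < \<gamma> * \<delta>\<close> by (smt (verit) zero_less_power)
  next
    case False
    have "v\<^sup>2 < \<gamma>\<^sup>2" "v\<^sup>2 < \<delta>\<^sup>2" "\<gamma>\<^sup>2 \<le> \<alpha>\<^sup>2"
      using assms(1-5) by (simp_all add: power_strict_mono power_mono)
    have "\<alpha>\<^sup>2 * (\<gamma>\<^sup>2 - v\<^sup>2) \<le> \<gamma>\<^sup>2 * (\<alpha>\<^sup>2 - v\<^sup>2)"
      using \<open>\<gamma>\<^sup>2 \<le> \<alpha>\<^sup>2\<close> by (simp add: algebra_simps mult_right_mono)
    have "(\<alpha>\<^sup>2 - v\<^sup>2) * (\<alpha>\<^sup>2 * (\<beta>\<^sup>2 - v\<^sup>2)) < \<alpha>\<^sup>2 * ((\<gamma>\<^sup>2 - v\<^sup>2) * (\<delta>\<^sup>2 - v\<^sup>2))"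
      using fail \<open>0 < \<alpha>\<close> by (simp add: mult.left_commute)
    also have "\<dots> \<le> \<gamma>\<^sup>2 * (\<alpha>\<^sup>2 - v\<^sup>2) * (\<delta>\<^sup>2 - v\<^sup>2)"
      using \<open>\<alpha>\<^sup>2 * (\<gamma>\<^sup>2 - v\<^sup>2) \<le> \<gamma>\<^sup>2 * (\<alpha>\<^sup>2 - v\<^sup>2)\<close> \<open>v\<^sup>2 < \<delta>\<^sup>2\<close>
      by (simp add: mult.assoc[symmetric] mult_right_mono)
    also have "\<dots> \<le> \<gamma>\<^sup>2 * (\<alpha>\<^sup>2 - v\<^sup>2) * \<delta>\<^sup>2"
      using \<open>v\<^sup>2 < \<gamma>\<^sup>2\<close> \<open>\<gamma>\<^sup>2 \<le> \<alpha>\<^sup>2\<close> by (intro mult_left_mono) simp_all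
    finally have "\<alpha>\<^sup>2 * (\<beta>\<^sup>2 - v\<^sup>2) < \<gamma>\<^sup>2 * \<delta>\<^sup>2"
      using \<open>v\<^sup>2 < \<gamma>\<^sup>2\<close> \<open>\<gamma>\<^sup>2 \<le> \<alpha>\<^sup>2\<close> by (simp add: mult_less_cancel_left_pos)
    then show ?thesis
      by (simp add: power_mult_distrib algebra_simps)
  qed
  moreover have "(\<gamma> * \<delta> + \<alpha>)\<^sup>2 \<le> (\<alpha> * \<beta>)\<^sup>2"
    using gap \<open>0 < \<gamma> * \<delta>\<close> \<open>0 < \<alpha>\<close> by (intro power_mono) simp_all
  ultimately have "\<alpha> * (2 * (\<gamma> * \<delta>)) < \<alpha> * (\<alpha> * (v\<^sup>2 - 1))"
    by (simp add: power2_eq_square algebra_simps)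
  then show ?thesis
    using \<open>0 < \<alpha>\<close> by simp
qed

lemma reflection_failure_growth:
  fixes \<alpha> \<beta> \<gamma> \<delta> v :: real
  assumes "0 < \<gamma>" "\<gamma> \<le> \<alpha>" "0 \<le> v" "v < \<gamma>" "v < \<delta>" "0 \<le> \<beta>"
    and gap: "\<gamma> * \<delta> + \<alpha> \<le> \<alpha> * \<beta>"
    and fail: "(\<alpha>\<^sup>2 - v\<^sup>2) * (\<beta>\<^sup>2 - v\<^sup>2) < (\<gamma>\<^sup>2 - v\<^sup>2) * (\<delta>\<^sup>2 - v\<^sup>2)"
  shows "2 * ((\<gamma> - v) * (\<delta> - v)) < (v - 1) * ((\<alpha> + v) * (\<beta> + v) - (\<gamma> - v) * (\<delta> - v))"
proof -
  have large: "2 * (\<gamma> * \<delta>) < \<alpha> * (v\<^sup>2 - 1)"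
    using reflection_failure_large assms(1-5) gap fail by blast
  have "0 < \<alpha>" "0 < \<gamma> * \<delta>"
    using assms(1-5) by simp_all
  with large have "1 \<le> v"
    using \<open>0 \<le> v\<close> by (smt (verit) mult_nonneg_nonpos power_le_one)
  have "\<alpha> * (1 + v) \<le> (\<alpha> + v) * (\<beta> + v) - (\<gamma> - v) * (\<delta> - v)"
  proof -
    have "0 \<le> v * (\<beta> + \<gamma> + \<delta>)"
      using assms(1-6) by simp
    then show ?thesis
      using gap by (simp add: algebra_simps)
  qed
  then have "\<alpha> * (v\<^sup>2 - 1) \<le> (v - 1) * ((\<alpha> + v) * (\<beta> + v) - (\<gamma> - v) * (\<delta> - v))"
    using mult_left_mono[of _ _ "v - 1"] \<open>1 \<le> v\<close>
    by (fastforce simp: power2_eq_square algebra_simps)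
  moreover have "(\<gamma> - v) * (\<delta> - v) \<le> \<gamma> * \<delta>"
  proof -
    have "0 \<le> v * (\<gamma> + \<delta> - v)"
      using assms(3-5) by simp
    then show ?thesis
      by (simp add: algebra_simps)
  qed
  ultimately show ?thesis
    using large by linarith
qed

locale hyp_mean_bracket =
  fixes n i k c :: nat
  assumes i_le_n: "i \<le> n" and two_k_le_n: "2 * k \<le> n" and c_pos: "1 \<le> c"
    and c_below_mean: "c * n < i * k" and mean_le_Suc_c: "i * k \<le> (c + 1) * n"
begin

abbreviation p :: "nat \<Rightarrow> real" where
  "p \<equiv> hyp_pmf n i k"

text \<open>In the shifted coordinate \<open>x = j - c + 1\<close> the ratio recurrence reads
  \<open>p(j+1) (\<gamma>+x) (\<delta>+x) = p(j) (\<alpha>-x) (\<beta>-x)\<close>, and the reflection \<open>j \<mapsto> 2c - 1 - j\<close> is \<open>x \<mapsto> -x\<close>.\<close>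

definition \<alpha> :: real where "\<alpha> = real i - real c + 1"
definition \<beta> :: real where "\<beta> = real k - real c + 1"
definition \<gamma> :: real where "\<gamma> = real c"
definition \<delta> :: real where "\<delta> = real n - real i - real k + real c"

lemma c_less_k: "c < k"
proof (rule ccontr)
  assume "\<not> c < k"
  then have "i * k \<le> c * n"
    using i_le_n by (metis mult.commute mult_le_mono not_less)
  then show False
    using c_below_mean by simp
qed

lemma k_le_n: "k \<le> n"
  using two_k_le_n by simp

lemma gamma_pos: "0 < \<gamma>"
  using c_pos by (simp add: \<gamma>_def)

lemma beta_pos: "0 < \<beta>"
  using c_less_k by (simp add: \<beta>_def)

lemma two_c_less_i: "2 * c < i"
proof -
  have "2 * c * k \<le> c * n"
    using two_k_le_n by simp
  then have "2 * c * k < i * k"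
    using c_below_mean by linarith
  then show ?thesis
    by simp
qed

lemma gamma_le_alpha: "\<gamma> \<le> \<alpha>"
  using two_c_less_i by (simp add: \<alpha>_def \<gamma>_def)

lemma excess_eq: "(\<alpha> - 1) * (\<beta> - 1) = \<gamma> * \<delta> + (real i * real k - real c * real n)"
  by (simp add: \<alpha>_def \<beta>_def \<gamma>_def \<delta>_def algebra_simps)

lemma excess_bounds: "1 \<le> real i * real k - real c * real n" "real i * real k - real c * real n \<le> real n"
proof -
  have "real (c * n) + 1 \<le> real (i * k)" "real (i * k) \<le> real ((c + 1) * n)"
    using c_below_mean mean_le_Suc_c by linarith+
  then show "1 \<le> real i * real k - real c * real n" "real i * real k - real c * real n \<le> real n"
    by (simp_all add: algebra_simps)
qed

lemma gamma_delta_plus_alpha_le: "\<gamma> * \<delta> + \<alpha> \<le> \<alpha> * \<beta>"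
  using excess_eq excess_bounds(1) beta_pos by (simp add: algebra_simps)

lemma p_Suc_shifted:
  assumes "x = real j - real c + 1"
  shows "p (Suc j) * ((\<gamma> + x) * (\<delta> + x)) = p j * ((\<alpha> - x) * (\<beta> - x))"
  using hyp_pmf_Suc[OF i_le_n, of k j] by (simp add: assms \<alpha>_def \<beta>_def \<gamma>_def \<delta>_def algebra_simps)

lemma p_eq_0:
  assumes "\<delta> + (real j - real c + 1) \<le> 0"
  shows "p j = 0"
proof -
  have "real n + real j + 1 \<le> real i + real k"
    using assms by (simp add: \<delta>_def)
  then have "n + j + 1 \<le> i + k"
    by (metis of_nat_1 of_nat_add of_nat_le_iff)
  then have "n - i < k - j"
    using i_le_n by linarith
  then show ?thesis
    by (rule hyp_pmf_eq_0)
qed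

lemma p_le_2_p_Suc: "p c \<le> 2 * p (Suc c)"
proof -
  have ratio: "p (Suc c) * ((\<gamma> + 1) * (\<delta> + 1)) = p c * ((\<alpha> - 1) * (\<beta> - 1))"
    by (rule p_Suc_shifted) simp
  consider "n + c + 1 \<le> i + k" | "i + k = n + c" | "i + k + 1 \<le> n + c"
    by linarith
  then show ?thesis
  proof cases
    case 1
    then have "p c = 0"
      by (intro p_eq_0) (simp add: \<delta>_def)
    then show ?thesis
      using hyp_pmf_nonneg by simp
  next
    case 2
    then have "\<delta> = 0"
      by (simp add: \<delta>_def)
    have "1 \<le> \<beta> - 1" "\<gamma> + 1 \<le> \<alpha> - 1"
      using c_less_k two_c_less_i by (simp_all add: \<alpha>_def \<beta>_def \<gamma>_def)
    moreover have "(\<alpha> - 1) * 1 \<le> (\<alpha> - 1) * (\<beta> - 1)"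
      using \<open>1 \<le> \<beta> - 1\<close> \<open>\<gamma> + 1 \<le> \<alpha> - 1\<close> gamma_pos by (intro mult_left_mono) simp_all
    ultimately have "\<gamma> + 1 \<le> (\<alpha> - 1) * (\<beta> - 1)"
      by simp
    then have "p c * (\<gamma> + 1) \<le> p c * (2 * ((\<alpha> - 1) * (\<beta> - 1)))"
      using gamma_pos hyp_pmf_nonneg by (intro mult_left_mono) simp_all
    also have "\<dots> = 2 * p (Suc c) * (\<gamma> + 1)"
      using ratio \<open>\<delta> = 0\<close> by simp
    finally show ?thesis
      using gamma_pos by (simp add: mult_le_cancel_right_pos)
  next
    case 3
    then have "1 \<le> \<delta>"
      by (simp add: \<delta>_def)
    have "(\<gamma> + 1) * (\<delta> + 1) \<le> 2 * ((\<alpha> - 1) * (\<beta> - 1))"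
    proof -
      have "0 \<le> (\<gamma> - 1) * (\<delta> - 1)"
        using \<open>1 \<le> \<delta>\<close> c_pos by (simp add: \<gamma>_def)
      then show ?thesis
        using excess_eq excess_bounds(1) by (simp add: algebra_simps)
    qed
    then have "p c * ((\<gamma> + 1) * (\<delta> + 1)) \<le> p c * (2 * ((\<alpha> - 1) * (\<beta> - 1)))"
      using hyp_pmf_nonneg by (rule mult_left_mono)
    also have "\<dots> = 2 * p (Suc c) * ((\<gamma> + 1) * (\<delta> + 1))"
      using ratio by simp
    finally have "p c * ((\<gamma> + 1) * (\<delta> + 1)) \<le> 2 * p (Suc c) * ((\<gamma> + 1) * (\<delta> + 1))" .
    moreover have "0 < (\<gamma> + 1) * (\<delta> + 1)"
      using gamma_pos \<open>1 \<le> \<delta>\<close> by simp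
    ultimately show ?thesis
      by (rule mult_right_le_imp_le)
  qed
qed

lemma shift_sum: "\<alpha> + \<beta> + \<gamma> + \<delta> = real n + 2"
  by (simp add: \<alpha>_def \<beta>_def \<gamma>_def \<delta>_def)

lemma p_Suc_le:
  assumes "0 < \<delta>" "c + 1 \<le> j"
  shows "p (Suc j) \<le> p j"
proof -
  define x where "x = real j - real c + 1"
  have "2 \<le> x"
    using assms(2) by (simp add: x_def)
  have "(\<alpha> - x) * (\<beta> - x) \<le> (\<gamma> + x) * (\<delta> + x)"
  proof -
    have "1 \<le> \<gamma>"
      using c_pos by (simp add: \<gamma>_def)
    then have "\<alpha> + \<beta> \<le> real n + 1"
      using shift_sum assms(1) by linarith
    then have "\<alpha> * \<beta> - \<gamma> * \<delta> \<le> x * (real n + 2)"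
    proof -
      have "2 * (real n + 2) \<le> x * (real n + 2)"
        using \<open>2 \<le> x\<close> by (intro mult_right_mono) simp_all
      moreover have "\<alpha> * \<beta> - \<gamma> * \<delta> = (real i * real k - real c * real n) + \<alpha> + \<beta> - 1"
        using excess_eq by (simp add: algebra_simps)
      ultimately show ?thesis
        using excess_bounds(2) \<open>\<alpha> + \<beta> \<le> real n + 1\<close> by argo
    qed
    then show ?thesis
      unfolding shift_sum[symmetric] by (simp add: algebra_simps)
  qed
  then have "p (Suc j) * ((\<gamma> + x) * (\<delta> + x)) \<le> p j * ((\<gamma> + x) * (\<delta> + x))"
    unfolding p_Suc_shifted[OF x_def] using hyp_pmf_nonneg by (rule mult_left_mono)
  moreover have "0 < (\<gamma> + x) * (\<delta> + x)"
    using gamma_pos assms(1) \<open>2 \<le> x\<close> by simp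
  ultimately show ?thesis
    by (rule mult_right_le_imp_le)
qed

lemma p_antimono:
  assumes "0 < \<delta>" "c + 1 \<le> j" "j \<le> j'"
  shows "p j' \<le> p j"
  using assms(3)
proof (induction j' rule: dec_induct)
  case (step j')
  then show ?case
    using p_Suc_le[OF assms(1), of j'] assms(2) by simp
qed simp

definition pairable :: "nat \<Rightarrow> bool" where
  "pairable u \<longleftrightarrow> real u < \<delta> \<and>
     (\<gamma>\<^sup>2 - (real u)\<^sup>2) * (\<delta>\<^sup>2 - (real u)\<^sup>2) \<le> (\<alpha>\<^sup>2 - (real u)\<^sup>2) * (\<beta>\<^sup>2 - (real u)\<^sup>2)"

lemma p_pred_c_le: "p (c - 1) \<le> p c"
proof (cases "\<delta> \<le> 0")
  case True
  then have "p (c - 1) = 0"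
    using c_pos by (intro p_eq_0) (simp add: of_nat_diff)
  then show ?thesis
    using hyp_pmf_nonneg by simp
next
  case False
  have "p c * (\<gamma> * \<delta>) = p (c - 1) * (\<alpha> * \<beta>)"
    using p_Suc_shifted[of 0 "c - 1"] c_pos by (simp add: of_nat_diff)
  moreover have "p (c - 1) * (\<gamma> * \<delta>) \<le> p (c - 1) * (\<alpha> * \<beta>)"
    using gamma_delta_plus_alpha_le gamma_le_alpha gamma_pos hyp_pmf_nonneg by (intro mult_left_mono) simp_all
  moreover have "0 < \<gamma> * \<delta>"
    using False gamma_pos by simp
  ultimately show ?thesis
    by (metis mult_right_le_imp_le)
qed

lemma p_reflect:
  assumes "l \<le> c - 1" "\<forall>u\<in>{1..l}. pairable u"
  shows "p (c - 1 - l) \<le> p (c + l)"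
  using assms
proof (induction l)
  case 0
  then show ?case
    using p_pred_c_le by simp
next
  case (Suc l)
  define u where "u = real (Suc l)"
  have "pairable (Suc l)"
    using Suc.prems(2) by simp
  have up: "p (c + Suc l) * ((\<gamma> + u) * (\<delta> + u)) = p (c + l) * ((\<alpha> - u) * (\<beta> - u))"
    using p_Suc_shifted[of u "c + l"] by (simp add: u_def)
  have "p (Suc (c - 1 - Suc l)) * ((\<gamma> + - u) * (\<delta> + - u))
      = p (c - 1 - Suc l) * ((\<alpha> - - u) * (\<beta> - - u))"
    using Suc.prems(1) by (intro p_Suc_shifted) (simp add: u_def of_nat_diff)
  then have down: "p (c - 1 - l) * ((\<gamma> - u) * (\<delta> - u)) = p (c - 1 - Suc l) * ((\<alpha> + u) * (\<beta> + u))"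
    using Suc.prems(1) by (simp add: Suc_diff_Suc)
  show ?case
  proof (rule reflected_ratio_step[OF _ _ gamma_le_alpha _ _ _ _ _ up down])
    show "0 < u" "u < \<gamma>" "0 \<le> \<beta>"
      using Suc.prems(1) beta_pos by (simp_all add: u_def \<gamma>_def)
    show "u < \<delta>" "(\<gamma>\<^sup>2 - u\<^sup>2) * (\<delta>\<^sup>2 - u\<^sup>2) \<le> (\<alpha>\<^sup>2 - u\<^sup>2) * (\<beta>\<^sup>2 - u\<^sup>2)"
      using \<open>pairable (Suc l)\<close> by (simp_all add: pairable_def u_def)
    show "p (c - 1 - l) \<le> p (c + l)"
      using Suc by simp
  qed (rule hyp_pmf_nonneg)
qed

lemma pairable_imp_le_k:
  assumes "l \<le> c - 1" "\<forall>u\<in>{1..l}. pairable u"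
  shows "c + l \<le> k"
proof (cases "l = 0")
  case False
  have "real l < \<beta>"
  proof (rule reflection_cond_imp_less[OF _ _ gamma_le_alpha])
    show "0 < real l" "real l < \<gamma>"
      using False assms(1) c_pos by (simp_all add: \<gamma>_def)
    show "real l < \<delta>"
      "(\<gamma>\<^sup>2 - (real l)\<^sup>2) * (\<delta>\<^sup>2 - (real l)\<^sup>2) \<le> (\<alpha>\<^sup>2 - (real l)\<^sup>2) * (\<beta>\<^sup>2 - (real l)\<^sup>2)"
      using False assms(2) by (simp_all add: pairable_def)
  qed (use beta_pos in simp)
  then show ?thesis
    by (simp add: \<beta>_def)
qed (use c_less_k in simp)

lemma sum_reflect_le:
  assumes "l \<le> c - 1" "\<forall>u\<in>{1..l}. pairable u"
  shows "(\<Sum>j = c - 1 - l..<c. p j) \<le> (\<Sum>j = c..k. p j)"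
proof -
  have "c + l \<le> k"
    using assms by (rule pairable_imp_le_k)
  have "(\<Sum>j = c - 1 - l..<c. p j) = (\<Sum>j = c..c + l. p (2 * c - 1 - j))"
  proof (rule sum.reindex_bij_witness[of _ "\<lambda>j. 2 * c - 1 - j" "\<lambda>j. 2 * c - 1 - j"])
    fix j
    assume "j \<in> {c - 1 - l..<c}"
    then show "2 * c - 1 - (2 * c - 1 - j) = j" "2 * c - 1 - j \<in> {c..c + l}"
      "p (2 * c - 1 - (2 * c - 1 - j)) = p j"
      using assms(1) by auto
  next
    fix j
    assume "j \<in> {c..c + l}"
    then show "2 * c - 1 - (2 * c - 1 - j) = j" "2 * c - 1 - j \<in> {c - 1 - l..<c}"
      using assms(1) c_pos by auto
  qed
  also have "\<dots> \<le> (\<Sum>j = c..c + l. p j)"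
  proof (rule sum_mono)
    fix j
    assume "j \<in> {c..c + l}"
    then have "j - c \<le> l"
      by auto
    then have "p (c - 1 - (j - c)) \<le> p (c + (j - c))"
      using assms by (intro p_reflect) (simp, meson atLeastAtMost_iff order_trans)
    then show "p (2 * c - 1 - j) \<le> p j"
      using \<open>j \<in> {c..c + l}\<close> by (simp add: numeral_2_eq_2)
  qed
  also have "\<dots> \<le> (\<Sum>j = c..k. p j)"
    using \<open>c + l \<le> k\<close> hyp_pmf_nonneg by (intro sum_mono2) auto
  finally show ?thesis .
qed

lemma p_upper_mass:
  assumes "0 < \<delta>" "l \<le> c - 1" "\<forall>u\<in>{1..l}. pairable u"
  shows "real l * p (c + l) \<le> (\<Sum>j = c..k. p j)"
proof -
  have "real (card {c + 1..c + l}) * p (c + l) \<le> (\<Sum>j = c + 1..c + l. p j)"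
    using assms(1) by (intro sum_bounded_below p_antimono) auto
  also have "\<dots> \<le> (\<Sum>j = c..k. p j)"
    using pairable_imp_le_k[OF assms(2,3)] hyp_pmf_nonneg by (intro sum_mono2) auto
  finally show ?thesis
    by simp
qed

lemma p_growth:
  assumes "0 < v" "v < \<delta>" "real j - real c + 1 \<le> - v"
  shows "(\<alpha> + v) * (\<beta> + v) / ((\<gamma> - v) * (\<delta> - v)) * p j \<le> p (Suc j)"
proof -
  define x where "x = real j - real c + 1"
  have ratio: "p (Suc j) * ((\<gamma> + x) * (\<delta> + x)) = p j * ((\<alpha> - x) * (\<beta> - x))"
    using x_def by (rule p_Suc_shifted)
  have "0 < \<gamma> + x" "x \<le> - v" "0 < \<gamma> - v"
    using assms(3) by (simp_all add: x_def \<gamma>_def)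
  show ?thesis
  proof (cases "\<delta> + x \<le> 0")
    case True
    then show ?thesis
      using p_eq_0[of j] hyp_pmf_nonneg by (simp add: x_def)
  next
    case False
    have "(\<alpha> + v) * (\<beta> + v) \<le> (\<alpha> - x) * (\<beta> - x)"
      using \<open>x \<le> - v\<close> assms(1) gamma_pos gamma_le_alpha beta_pos by (intro mult_mono) auto
    moreover have "(\<gamma> + x) * (\<delta> + x) \<le> (\<gamma> - v) * (\<delta> - v)"
      using \<open>x \<le> - v\<close> \<open>0 < \<gamma> + x\<close> False by (intro mult_mono) auto
    ultimately have "(\<alpha> + v) * (\<beta> + v) / ((\<gamma> - v) * (\<delta> - v))
        \<le> (\<alpha> - x) * (\<beta> - x) / ((\<gamma> + x) * (\<delta> + x))"
      using \<open>0 < \<gamma> + x\<close> False \<open>x \<le> - v\<close> assms(1) gamma_pos gamma_le_alpha beta_pos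
      by (intro frac_le) simp_all
    then have "(\<alpha> + v) * (\<beta> + v) / ((\<gamma> - v) * (\<delta> - v)) * p j
        \<le> (\<alpha> - x) * (\<beta> - x) / ((\<gamma> + x) * (\<delta> + x)) * p j"
      using hyp_pmf_nonneg by (rule mult_right_mono)
    also have "\<dots> = p j * ((\<alpha> - x) * (\<beta> - x)) / ((\<gamma> + x) * (\<delta> + x))"
      by simp
    also have "\<dots> = p (Suc j)"
      unfolding ratio[symmetric] using \<open>0 < \<gamma> + x\<close> False by simp
    finally show ?thesis .
  qed
qed

lemma lower_tail_le:
  assumes "l < c - 1" "\<forall>u\<in>{1..l}. pairable u" "\<not> pairable (Suc l)"
  shows "2 * (\<Sum>j<c - 1 - l. p j) \<le> (\<Sum>j = c..k. p j)"
proof -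
  define v where "v = real (Suc l)"
  define T where "T = (\<Sum>j<c - 1 - l. p j)"
  have below_v: "real j - real c + 1 \<le> - v" if "j < c - 1 - l" for j
    using that by (simp add: v_def)
  have "0 \<le> T" "0 \<le> (\<Sum>j = c..k. p j)"
    unfolding T_def using hyp_pmf_nonneg by (simp_all add: sum_nonneg)
  show ?thesis
  proof (cases "v < \<delta>")
    case False
    then have "T = 0"
      unfolding T_def using below_v by (intro sum.neutral ballI p_eq_0) force
    then show ?thesis
      using \<open>0 \<le> (\<Sum>j = c..k. p j)\<close> by (simp add: T_def)
  next
    case True
    define Q where "Q = (\<gamma> - v) * (\<delta> - v)"
    define \<rho> where "\<rho> = (\<alpha> + v) * (\<beta> + v) / Q"
    have "v < \<gamma>"
      using assms(1) by (simp add: v_def \<gamma>_def)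
    then have "0 < Q"
      using True by (simp add: Q_def)
    have "2 * Q < (v - 1) * ((\<alpha> + v) * (\<beta> + v) - Q)"
      unfolding Q_def
    proof (rule reflection_failure_growth[OF gamma_pos gamma_le_alpha _ \<open>v < \<gamma>\<close> True _ gamma_delta_plus_alpha_le])
      show "(\<alpha>\<^sup>2 - v\<^sup>2) * (\<beta>\<^sup>2 - v\<^sup>2) < (\<gamma>\<^sup>2 - v\<^sup>2) * (\<delta>\<^sup>2 - v\<^sup>2)"
        using assms(3) True by (simp add: pairable_def v_def)
    qed (use beta_pos in \<open>simp_all add: v_def\<close>)
    also have "\<dots> = real l * (\<rho> - 1) * Q"
      using \<open>0 < Q\<close> by (simp add: \<rho>_def v_def field_simps)
    finally have "2 \<le> real l * (\<rho> - 1)"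
      using \<open>0 < Q\<close> by simp
    have "(\<rho> - 1) * T \<le> p (c - 1 - l)"
      unfolding T_def \<rho>_def Q_def
      using hyp_pmf_nonneg p_growth[OF _ True below_v] by (intro growth_sum_lessThan_le) (simp_all add: v_def)
    also have "\<dots> \<le> p (c + l)"
      using assms(1,2) by (intro p_reflect) simp_all
    finally have "real l * ((\<rho> - 1) * T) \<le> real l * p (c + l)"
      by (simp add: mult_left_mono)
    also have "\<dots> \<le> (\<Sum>j = c..k. p j)"
      using True assms(1,2) by (intro p_upper_mass) (simp_all add: v_def)
    finally have "real l * (\<rho> - 1) * T \<le> (\<Sum>j = c..k. p j)"
      by (simp add: mult.assoc)
    moreover have "2 * T \<le> real l * (\<rho> - 1) * T"
      using \<open>2 \<le> real l * (\<rho> - 1)\<close> \<open>0 \<le> T\<close> by (rule mult_right_mono)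
    ultimately show ?thesis
      by (simp add: T_def)
  qed
qed

lemma maximal_pairable_prefix:
  obtains l where "l \<le> c - 1" "\<forall>u\<in>{1..l}. pairable u" "l < c - 1 \<Longrightarrow> \<not> pairable (Suc l)"
proof -
  define P where "P l \<longleftrightarrow> l \<le> c - 1 \<and> (\<forall>u\<in>{1..l}. pairable u)" for l
  define L where "L = Greatest P"
  have "P 0" "\<And>l. P l \<Longrightarrow> l \<le> c - 1"
    by (simp_all add: P_def)
  then have "P L" and L_max: "\<And>l. P l \<Longrightarrow> l \<le> L"
    unfolding L_def by (blast intro: GreatestI_nat Greatest_le_nat)+
  show ?thesis
  proof (rule that)
    show "L \<le> c - 1" "\<forall>u\<in>{1..L}. pairable u"
      using \<open>P L\<close> by (simp_all add: P_def)
  next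
    assume "L < c - 1"
    show "\<not> pairable (Suc L)"
    proof
      assume "pairable (Suc L)"
      then have "P (Suc L)"
        using \<open>P L\<close> \<open>L < c - 1\<close> by (auto simp: P_def le_Suc_eq)
      then show False
        using L_max by fastforce
    qed
  qed
qed

lemma prob_above_c: "2 / 15 \<le> (\<Sum>j = Suc c..k. p j)"
proof -
  define A where "A = (\<Sum>j = c..k. p j)"
  obtain l where l: "l \<le> c - 1" "\<forall>u\<in>{1..l}. pairable u" "l < c - 1 \<Longrightarrow> \<not> pairable (Suc l)"
    using maximal_pairable_prefix by blast
  have "1 = (\<Sum>j\<le>k. p j)"
    using sum_hyp_pmf[OF i_le_n k_le_n] by simp
  also have "\<dots> = (\<Sum>j<c - 1 - l. p j) + (\<Sum>j = c - 1 - l..<c. p j) + A"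
  proof -
    have "{..k} = {..<c - 1 - l} \<union> {c - 1 - l..<c} \<union> {c..k}"
      using c_less_k by auto
    moreover have "{..<c - 1 - l} \<inter> {c - 1 - l..<c} = {}" "({..<c - 1 - l} \<union> {c - 1 - l..<c}) \<inter> {c..k} = {}"
      by auto
    ultimately show ?thesis
      unfolding A_def by (simp add: sum.union_disjoint)
  qed
  also have "\<dots> \<le> A / 2 + A + A"
  proof -
    have "2 * (\<Sum>j<c - 1 - l. p j) \<le> A"
    proof (cases "l < c - 1")
      case True
      then show ?thesis
        unfolding A_def using l by (intro lower_tail_le)
    next
      case False
      then show ?thesis
        using l(1) hyp_pmf_nonneg by (simp add: A_def sum_nonneg)
    qed
    then show ?thesis
      using sum_reflect_le[OF l(1,2)] by (simp add: A_def)
  qed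
  finally have "2 / 5 \<le> A"
    by simp
  moreover have "A = p c + (\<Sum>j = Suc c..k. p j)"
    using c_less_k by (simp add: A_def sum.atLeast_Suc_atMost)
  moreover have "p (Suc c) \<le> (\<Sum>j = Suc c..k. p j)"
    using c_less_k hyp_pmf_nonneg by (intro member_le_sum) auto
  ultimately show ?thesis
    using p_le_2_p_Suc by linarith
qed

end

theorem theorem1:
  fixes n k i :: nat
  assumes "0 < k" and "n \<ge> 8 * k" and "1 \<le> i" and "i \<le> n"
  shows "hyp_prob_ge n i k (hyp_mean n i k) \<ge> real k / real n"
proof -
  define m where "m = hyp_mean n i k"
  define c where "c = nat \<lceil>m\<rceil> - 1"
  have "0 < n" "0 < m"
    using assms by (simp_all add: m_def hyp_mean_def)
  then have "nat \<lceil>m\<rceil> = Suc c" "real c < m" "m \<le> real c + 1"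
    unfolding c_def by linarith+
  then have prob: "hyp_prob_ge n i k m = (\<Sum>j = Suc c..k. hyp_pmf n i k j)"
    by (simp add: hyp_prob_ge_eq_sum)
  show ?thesis
  proof (cases "c = 0")
    case True
    then show ?thesis
      using prob hyp_prob_pos_ge assms by (simp add: m_def)
  next
    case False
    have "real (c * n) < real (i * k)" "real (i * k) \<le> real ((c + 1) * n)"
      using \<open>real c < m\<close> \<open>m \<le> real c + 1\<close> \<open>0 < n\<close> by (simp_all add: m_def hyp_mean_def field_simps)
    then have "c * n < i * k" "i * k \<le> (c + 1) * n"
      by (simp_all only: of_nat_less_iff of_nat_le_iff)
    then interpret hyp_mean_bracket n i k c
      using assms False by unfold_locales simp_all
    have "real k / real n \<le> 1 / 8"
      using assms \<open>0 < n\<close> by (simp add: field_simps)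
    then show ?thesis
      using prob prob_above_c by (simp add: m_def)
  qed
qed

end
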